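(* Let $f:\mathbb{R}^n\times\mathbb{R}^m\to\mathbb{R}$ be twice continuously differentiable, $\mu$-strongly convex in $x$ for every fixed $y$ and $\mu$-strongly concave in $y$ for every fixed $x$ ($\mu>0$). Write $z=(x;y)$ and $F(z)=(\nabla_x f(x,y);-\nabla_y f(x,y))$. Assume the largest singular value of the Jacobian $\nabla F(z)$ is at most $L$ for all $z$, and that $\|\nabla F(z)-\nabla F(z')\|\le L_2\|z-z'\|$ for all $z,z'$. Let $m(z)=\frac12\|F(z)\|^2$. Fix $z^0$, let $\mathcal{Z}=\{z: m(z)\le m(z^0)\}$ and $D=\max\{\|z-z^0\|: z\in\mathcal{Z}\}$. Then for all $z,z'\in\mathcal{Z}$, $$\|\nabla m(z)-\nabla m(z')\|\le L_m\|z-z'\|\qquad\text{with } L_m=L^2+L_2LD.$$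
   Context: $\|\cdot\|$ denotes the Euclidean norm for vectors and the largest singular value for matrices. $\nabla m(z)=\nabla F(z)^\top F(z)$. *)

theory Defs
  imports "HOL-Analysis.Analysis"
begin

definition strongly_convex_on :: "real \<Rightarrow> 'a::real_normed_vector set \<Rightarrow> ('a \<Rightarrow> real) \<Rightarrow> bool" where
  "strongly_convex_on \<mu> S g \<longleftrightarrow> convex S \<and>
     (\<forall>x\<in>S. \<forall>y\<in>S. \<forall>t::real. 0 \<le> t \<and> t \<le> 1 \<longrightarrow>
        g ((1 - t) *\<^sub>R x + t *\<^sub>R y) \<le> (1 - t) * g x + t * g y - \<mu> / 2 * t * (1 - t) * (norm (x - y))\<^sup>2)"

definition strongly_concave_on :: "real \<Rightarrow> 'a::real_normed_vector set \<Rightarrow> ('a \<Rightarrow> real) \<Rightarrow> bool" where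
  "strongly_concave_on \<mu> S g \<longleftrightarrow> strongly_convex_on \<mu> S (\<lambda>x. - g x)"

end

theory Submission
  imports Defs
begin

text \<open>
  Strong convexity in \<open>x\<close> and strong concavity in \<open>y\<close> make \<open>F\<close> \<open>\<mu>\<close>-strongly monotone. Hence
  sublevel sets of \<open>\<parallel>F\<parallel>\<close> are bounded, \<open>\<parallel>F\<parallel>\<^sup>2\<close> attains its minimum, and at a minimiser the
  vanishing gradient \<open>\<nabla>F\<^sup>T F\<close>, tested against \<open>F\<close>, forces \<open>F = 0\<close> because
  \<open>\<langle>\<nabla>F h, h\<rangle> \<ge> \<mu> \<parallel>h\<parallel>\<^sup>2\<close>. This zero \<open>z\<^sup>*\<close> lies in the sublevel set \<open>Z\<close> of \<open>m\<close>, so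
  \<open>\<parallel>F z\<parallel> \<le> \<parallel>F z\<^sup>0\<parallel> \<le> L \<parallel>z\<^sup>0 - z\<^sup>*\<parallel> \<le> L D\<close> on \<open>Z\<close>. The bound then follows from the splitting
  \<open>\<nabla>F(z)\<^sup>T F z - \<nabla>F(z')\<^sup>T F z' = \<nabla>F(z)\<^sup>T (F z - F z') + (\<nabla>F(z) - \<nabla>F(z'))\<^sup>T F z'\<close>.
\<close>

lemma DERIV_le_of_bound_at_right:
  fixes \<phi> g :: "real \<Rightarrow> real"
  assumes der: "(\<phi> has_real_derivative l) (at 0)"
    and bound: "\<forall>\<^sub>F t in at_right 0. \<phi> t \<le> \<phi> 0 + t * g t"
    and lim: "(g \<longlongrightarrow> K) (at_right 0)"
  shows "l \<le> K"
proof (rule tendsto_le[OF trivial_limit_at_right_real lim])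
  show "((\<lambda>t. (\<phi> t - \<phi> 0) / t) \<longlongrightarrow> l) (at_right 0)"
    using has_field_derivative_at_within[OF der, of "{0<..}"] by (simp add: has_field_derivative_iff)
  show "\<forall>\<^sub>F t in at_right 0. (\<phi> t - \<phi> 0) / t \<le> g t"
    using bound eventually_at_right_less[of "0::real"]
    by eventually_elim (simp add: divide_le_eq mult.commute)
qed

lemma has_derivative_along_line:
  assumes "(g has_derivative g') (at x)"
  shows "((\<lambda>t::real. g (x + t *\<^sub>R v)) has_real_derivative g' v) (at 0)"
proof -
  have "((\<lambda>t::real. x + t *\<^sub>R v) has_derivative (\<lambda>t. t *\<^sub>R v)) (at 0)"
    by (auto intro!: derivative_eq_intros)
  from diff_chain_at[OF this] assms
  have "((\<lambda>t. g (x + t *\<^sub>R v)) has_derivative (\<lambda>t. g' (t *\<^sub>R v))) (at 0)"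
    by (simp add: o_def)
  moreover have "g' (t *\<^sub>R v) = t * g' v" for t
    using linear_scale[OF has_derivative_linear[OF assms]] by simp
  ultimately show ?thesis
    by (simp add: has_real_derivative_iff_has_vector_derivative has_vector_derivative_def)
qed

lemma strongly_convex_on_gradient_ineq:
  fixes g :: "'a::real_normed_vector \<Rightarrow> real"
  assumes conv: "strongly_convex_on \<mu> S g" and "x \<in> S" "y \<in> S"
    and der: "(g has_derivative g') (at x)"
  shows "g' (y - x) \<le> g y - g x - \<mu> / 2 * (norm (x - y))\<^sup>2"
proof (rule DERIV_le_of_bound_at_right)
  let ?\<phi> = "\<lambda>t. g (x + t *\<^sub>R (y - x))"
  show "(?\<phi> has_real_derivative g' (y - x)) (at 0)"
    by (rule has_derivative_along_line[OF der])
  show "((\<lambda>t. g y - g x - \<mu> / 2 * (1 - t) * (norm (x - y))\<^sup>2) \<longlongrightarrow> g y - g x - \<mu> / 2 * (norm (x - y))\<^sup>2) (at_right 0)"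
    by (auto intro!: tendsto_eq_intros)
  have "?\<phi> t \<le> ?\<phi> 0 + t * (g y - g x - \<mu> / 2 * (1 - t) * (norm (x - y))\<^sup>2)"
    if "0 < t" "t < 1" for t
  proof -
    have "g ((1 - t) *\<^sub>R x + t *\<^sub>R y) \<le> (1 - t) * g x + t * g y - \<mu> / 2 * t * (1 - t) * (norm (x - y))\<^sup>2"
      using conv \<open>x \<in> S\<close> \<open>y \<in> S\<close> that unfolding strongly_convex_on_def by simp
    moreover have "x + t *\<^sub>R (y - x) = (1 - t) *\<^sub>R x + t *\<^sub>R y" by (simp add: algebra_simps)
    ultimately show ?thesis by (simp add: algebra_simps)
  qed
  then show "\<forall>\<^sub>F t in at_right 0. ?\<phi> t \<le> ?\<phi> 0 + t * (g y - g x - \<mu> / 2 * (1 - t) * (norm (x - y))\<^sup>2)"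
    unfolding eventually_at_right[OF zero_less_one] using zero_less_one by blast
qed

definition strongly_monotone :: "real \<Rightarrow> ('a::real_inner \<Rightarrow> 'a) \<Rightarrow> bool" where
  "strongly_monotone \<mu> F \<longleftrightarrow> (\<forall>z z'. \<mu> * (norm (z - z'))\<^sup>2 \<le> (F z - F z') \<bullet> (z - z'))"

lemma has_derivative_partial_fst:
  assumes "(f has_derivative f') (at (x, y))"
  shows "((\<lambda>x. f (x, y)) has_derivative (\<lambda>h. f' (h, 0))) (at x)"
proof -
  have "((\<lambda>x. (x, y)) has_derivative (\<lambda>h. (h, 0))) (at x)"
    by (auto intro!: derivative_eq_intros)
  from diff_chain_at[OF this] assms show ?thesis by (simp add: o_def)
qed

lemma has_derivative_partial_snd:
  assumes "(f has_derivative f') (at (x, y))"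
  shows "((\<lambda>y. f (x, y)) has_derivative (\<lambda>h. f' (0, h))) (at y)"
proof -
  have "((\<lambda>y. (x, y)) has_derivative (\<lambda>h. (0, h))) (at y)"
    by (auto intro!: derivative_eq_intros)
  from diff_chain_at[OF this] assms show ?thesis by (simp add: o_def)
qed

lemma saddle_gradient_strongly_monotone:
  fixes f :: "'a::real_inner \<times> 'b::real_inner \<Rightarrow> real"
  assumes grad: "\<And>z. (f has_derivative (\<lambda>h. G z \<bullet> h)) (at z)"
    and F_def: "\<And>z. F z = (fst (G z), - snd (G z))"
    and convex: "\<And>y. strongly_convex_on \<mu> UNIV (\<lambda>x. f (x, y))"
    and concave: "\<And>x. strongly_concave_on \<mu> UNIV (\<lambda>y. f (x, y))"
  shows "strongly_monotone \<mu> F"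
  unfolding strongly_monotone_def
proof (intro allI)
  fix z z' :: "'a \<times> 'b"
  obtain x y x' y' where z: "z = (x, y)" and z': "z' = (x', y')" by fastforce
  have fst_ineq: "fst (G (a, b)) \<bullet> (a' - a) \<le> f (a', b) - f (a, b) - \<mu> / 2 * (norm (a - a'))\<^sup>2"
    for a a' b
    using strongly_convex_on_gradient_ineq[OF convex _ _ has_derivative_partial_fst[OF grad]]
    by (simp add: inner_Pair_0)
  have snd_ineq: "- (snd (G (a, b)) \<bullet> (b' - b)) \<le> f (a, b) - f (a, b') - \<mu> / 2 * (norm (b - b'))\<^sup>2"
    for a b b'
    using strongly_convex_on_gradient_ineq[OF concave[unfolded strongly_concave_on_def] _ _
        has_derivative_minus[OF has_derivative_partial_snd[OF grad]]]
    by (simp add: inner_Pair_0)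
  have "(F z - F z') \<bullet> (z - z') =
      - (fst (G (x, y)) \<bullet> (x' - x)) - fst (G (x', y')) \<bullet> (x - x')
      + snd (G (x, y)) \<bullet> (y' - y) + snd (G (x', y')) \<bullet> (y - y')"
    by (simp add: z z' F_def inner_diff_left inner_diff_right)
  moreover have "(norm (z - z'))\<^sup>2 = (norm (x - x'))\<^sup>2 + (norm (y - y'))\<^sup>2"
    by (simp add: z z' norm_Pair)
  ultimately show "\<mu> * (norm (z - z'))\<^sup>2 \<le> (F z - F z') \<bullet> (z - z')"
    using fst_ineq[of x y x'] fst_ineq[of x' y' x] snd_ineq[of x y y'] snd_ineq[of x' y' y]
    by (simp add: norm_minus_commute algebra_simps)
qed

lemma strongly_monotone_derivative:
  assumes mono: "strongly_monotone \<mu> F" and der: "(F has_derivative F') (at z)"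
  shows "\<mu> * (norm h)\<^sup>2 \<le> F' h \<bullet> h"
proof -
  have "- (F' h \<bullet> h) \<le> - (\<mu> * (norm h)\<^sup>2)"
  proof (rule DERIV_le_of_bound_at_right)
    let ?\<phi> = "\<lambda>t. - (F (z + t *\<^sub>R h) \<bullet> h)"
    show "(?\<phi> has_real_derivative - (F' h \<bullet> h)) (at 0)"
      by (rule has_derivative_along_line) (auto intro!: derivative_eq_intros der)
    have "?\<phi> t \<le> ?\<phi> 0 + t * - (\<mu> * (norm h)\<^sup>2)" if "0 < t" for t
    proof -
      have "t * (t * (\<mu> * (norm h)\<^sup>2)) \<le> t * ((F (z + t *\<^sub>R h) - F z) \<bullet> h)"
        using mono[unfolded strongly_monotone_def, rule_format, of "z + t *\<^sub>R h" z]
        by (simp add: power2_eq_square algebra_simps)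
      then have "t * (\<mu> * (norm h)\<^sup>2) \<le> (F (z + t *\<^sub>R h) - F z) \<bullet> h"
        using that by simp
      then show ?thesis by (simp add: inner_diff_left)
    qed
    then show "\<forall>\<^sub>F t in at_right 0. ?\<phi> t \<le> ?\<phi> 0 + t * - (\<mu> * (norm h)\<^sup>2)"
      using eventually_at_right_less[of "0::real"] by (auto elim: eventually_mono)
  qed simp
  then show ?thesis by simp
qed

lemma strongly_monotone_norm_le_imp_dist_le:
  assumes mono: "strongly_monotone \<mu> F" and "\<mu> > 0" and le: "norm (F z) \<le> norm (F z0)"
  shows "norm (z - z0) \<le> 2 * norm (F z0) / \<mu>"
proof -
  have "\<mu> * (norm (z - z0))\<^sup>2 \<le> norm (F z - F z0) * norm (z - z0)"
    using mono norm_cauchy_schwarz[of "F z - F z0" "z - z0"]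
    unfolding strongly_monotone_def by (meson order_trans)
  also have "\<dots> \<le> 2 * norm (F z0) * norm (z - z0)"
    using le norm_triangle_ineq4[of "F z" "F z0"] by (intro mult_right_mono) auto
  finally have "\<mu> * norm (z - z0) \<le> 2 * norm (F z0)"
    by (cases "z = z0") (auto simp: power2_eq_square)
  with \<open>\<mu> > 0\<close> show ?thesis by (simp add: field_simps)
qed

lemma strongly_monotone_has_zero:
  fixes F :: "'a::euclidean_space \<Rightarrow> 'a"
  assumes mono: "strongly_monotone \<mu> F" and "\<mu> > 0"
    and der: "\<And>z. (F has_derivative F' z) (at z)"
  shows "\<exists>z. F z = 0"
proof -
  have cont: "continuous_on UNIV F"
    using der by (meson continuous_at_imp_continuous_on has_derivative_continuous)
  define S where "S = {z. norm (F z) \<le> norm (F 0)}"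
  have "closed S"
    unfolding S_def by (intro closed_Collect_le continuous_intros cont)
  moreover have "bounded S"
    using strongly_monotone_norm_le_imp_dist_le[OF mono \<open>\<mu> > 0\<close>, of _ 0]
    by (intro boundedI[where B = "2 * norm (F 0) / \<mu>"]) (simp add: S_def)
  ultimately have "compact S" by (simp add: compact_eq_bounded_closed)
  moreover have "0 \<in> S" by (simp add: S_def)
  moreover have "continuous_on S (\<lambda>z. norm (F z))"
    by (intro continuous_intros continuous_on_subset[OF cont]) simp
  ultimately obtain zmin where "zmin \<in> S" and min_S: "\<And>z. z \<in> S \<Longrightarrow> norm (F zmin) \<le> norm (F z)"
    using continuous_attains_inf[of S "\<lambda>z. norm (F z)"] by blast
  have min: "F zmin \<bullet> F zmin \<le> F z \<bullet> F z" for z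
  proof (cases "z \<in> S")
    case True
    then show ?thesis using min_S[of z] by (simp add: norm_le)
  next
    case False
    then show ?thesis using \<open>zmin \<in> S\<close> by (simp add: S_def norm_le)
  qed
  have "((\<lambda>z. F z \<bullet> F z) has_derivative (\<lambda>h. F zmin \<bullet> F' zmin h + F' zmin h \<bullet> F zmin)) (at zmin)"
    by (auto intro!: derivative_eq_intros der)
  then have "(\<lambda>h. F zmin \<bullet> F' zmin h + F' zmin h \<bullet> F zmin) = (\<lambda>h. 0)"
    by (rule has_derivative_local_min) (simp add: min)
  then have "F' zmin (F zmin) \<bullet> F zmin = 0"
    by (metis (mono_tags) inner_commute mult_2 mult_eq_0_iff zero_neq_numeral)
  with strongly_monotone_derivative[OF mono der[of zmin], of "F zmin"] \<open>\<mu> > 0\<close> have "F zmin = 0"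
    by (simp add: mult_le_0_iff)
  then show ?thesis ..
qed

lemma norm_adjoint_diff_le:
  fixes A B :: "'a::euclidean_space \<Rightarrow>\<^sub>L 'b::euclidean_space"
  shows "norm (adjoint A u - adjoint B v) \<le> norm A * norm (u - v) + norm (A - B) * norm v"
proof -
  define w where "w = adjoint A u - adjoint B v"
  have lin: "linear (blinfun_apply C)" for C :: "'a \<Rightarrow>\<^sub>L 'b"
    by (simp add: blinfun.bounded_linear_right bounded_linear.linear)
  have "(norm w)\<^sup>2 = A w \<bullet> u - B w \<bullet> v"
    by (simp add: w_def power2_norm_eq_inner inner_diff_right adjoint_clauses(1)[OF lin])
  also have "\<dots> = A w \<bullet> (u - v) + (A - B) w \<bullet> v"
    by (simp add: inner_diff_left inner_diff_right blinfun.diff_left)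
  also have "\<dots> \<le> norm A * norm w * norm (u - v) + norm (A - B) * norm w * norm v"
    by (intro add_mono order_trans[OF norm_cauchy_schwarz] mult_right_mono norm_blinfun) auto
  finally have "norm w * norm w \<le> norm w * (norm A * norm (u - v) + norm (A - B) * norm v)"
    by (simp add: power2_eq_square algebra_simps)
  then show ?thesis
    unfolding w_def[symmetric] by (cases "norm w = 0") (auto intro: order_trans[OF _ norm_ge_zero])
qed

lemma norm_diff_le_of_derivative_bound:
  assumes "\<And>z. (F has_derivative blinfun_apply (DF z)) (at z)" and "\<And>z. norm (DF z) \<le> L"
  shows "norm (F z - F z') \<le> L * norm (z - z')"
  by (rule differentiable_bound[of UNIV F "\<lambda>z. blinfun_apply (DF z)" L])
    (auto intro: has_derivative_at_withinI assms simp: norm_blinfun.rep_eq[symmetric])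

lemma strongly_monotone_norm_le_on_sublevel:
  fixes F :: "'a::euclidean_space \<Rightarrow> 'a"
  assumes mono: "strongly_monotone \<mu> F" and "\<mu> > 0"
    and der: "\<And>z. (F has_derivative F' z) (at z)"
    and lip: "\<And>z z'. norm (F z - F z') \<le> L * norm (z - z')" and "0 \<le> L"
    and "z \<in> Z" and Z_def: "Z = {z. norm (F z) \<le> norm (F z0)}"
  shows "norm (F z) \<le> L * (SUP w \<in> Z. norm (w - z0))"
proof -
  obtain zstar where "F zstar = 0"
    using strongly_monotone_has_zero[OF mono \<open>\<mu> > 0\<close> der] by blast
  then have "zstar \<in> Z" by (simp add: Z_def)
  have "bdd_above ((\<lambda>w. norm (w - z0)) ` Z)"
    using strongly_monotone_norm_le_imp_dist_le[OF mono \<open>\<mu> > 0\<close>]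
    by (intro bdd_aboveI2) (auto simp: Z_def)
  then have "norm (zstar - z0) \<le> (SUP w \<in> Z. norm (w - z0))"
    using \<open>zstar \<in> Z\<close> by (rule cSUP_upper2) simp
  have "norm (F z) \<le> norm (F z0 - F zstar)"
    using \<open>z \<in> Z\<close> \<open>F zstar = 0\<close> by (simp add: Z_def)
  also have "\<dots> \<le> L * norm (zstar - z0)"
    using lip[of z0 zstar] by (simp add: norm_minus_commute)
  also have "\<dots> \<le> L * (SUP w \<in> Z. norm (w - z0))"
    by (intro mult_left_mono) fact+
  finally show ?thesis .
qed

theorem lemma2p4:
  fixes f :: "(real ^ 'n) \<times> (real ^ 'm) \<Rightarrow> real"
    and G :: "(real ^ 'n) \<times> (real ^ 'm) \<Rightarrow> (real ^ 'n) \<times> (real ^ 'm)"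
    and DF :: "(real ^ 'n) \<times> (real ^ 'm) \<Rightarrow> ((real ^ 'n) \<times> (real ^ 'm)) \<Rightarrow>\<^sub>L ((real ^ 'n) \<times> (real ^ 'm))"
    and F :: "(real ^ 'n) \<times> (real ^ 'm) \<Rightarrow> (real ^ 'n) \<times> (real ^ 'm)"
    and m :: "(real ^ 'n) \<times> (real ^ 'm) \<Rightarrow> real"
    and \<mu> L L2 :: real
    and z0 :: "(real ^ 'n) \<times> (real ^ 'm)"
  assumes grad_f: "\<And>z. (f has_derivative (\<lambda>h. G z \<bullet> h)) (at z)"
    and F_def: "\<And>z. F z = (fst (G z), - snd (G z))"
    and DF_deriv: "\<And>z. (F has_derivative blinfun_apply (DF z)) (at z)"
    and DF_cont: "continuous_on UNIV DF"
    and mu_pos: "\<mu> > 0"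
    and sconvex: "\<And>y. strongly_convex_on \<mu> UNIV (\<lambda>x. f (x, y))"
    and sconcave: "\<And>x. strongly_concave_on \<mu> UNIV (\<lambda>y. f (x, y))"
    and L_bound: "\<And>z. norm (DF z) \<le> L"
    and L2_lip: "\<And>z z'. norm (DF z - DF z') \<le> L2 * norm (z - z')"
    and m_def: "\<And>z. m z = 1/2 * (norm (F z))\<^sup>2"
  shows "\<forall>z \<in> {z. m z \<le> m z0}. \<forall>z' \<in> {z. m z \<le> m z0}.
           norm (adjoint (blinfun_apply (DF z)) (F z) - adjoint (blinfun_apply (DF z')) (F z'))
             \<le> (L\<^sup>2 + L2 * L * (SUP z \<in> {z. m z \<le> m z0}. norm (z - z0))) * norm (z - z')"
proof -
  define Z where "Z = {z. m z \<le> m z0}"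
  define D where "D = (SUP z \<in> Z. norm (z - z0))"
  have mono: "strongly_monotone \<mu> F"
    by (rule saddle_gradient_strongly_monotone[OF grad_f F_def sconvex sconcave])
  have lip: "norm (F z - F z') \<le> L * norm (z - z')" for z z'
    by (rule norm_diff_le_of_derivative_bound[OF DF_deriv L_bound])
  have "0 \<le> L" using L_bound[of z0] norm_ge_zero[of "DF z0"] by linarith
  have Z_eq: "Z = {z. norm (F z) \<le> norm (F z0)}"
    by (simp add: Z_def m_def power2_le_iff_abs_le)
  have F_le: "norm (F z) \<le> L * D" if "z \<in> Z" for z
    unfolding D_def
    by (rule strongly_monotone_norm_le_on_sublevel[OF mono mu_pos DF_deriv lip \<open>0 \<le> L\<close> that Z_eq])
  have "norm (adjoint (DF z) (F z) - adjoint (DF z') (F z')) \<le> (L\<^sup>2 + L2 * L * D) * norm (z - z')"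
    if "z \<in> Z" "z' \<in> Z" for z z'
  proof -
    have "0 \<le> L2 * norm (z - z')" using order_trans[OF norm_ge_zero L2_lip] .
    have "norm (adjoint (DF z) (F z) - adjoint (DF z') (F z'))
        \<le> norm (DF z) * norm (F z - F z') + norm (DF z - DF z') * norm (F z')"
      by (rule norm_adjoint_diff_le)
    also have "\<dots> \<le> L * (L * norm (z - z')) + L2 * norm (z - z') * (L * D)"
      using \<open>0 \<le> L\<close> \<open>0 \<le> L2 * norm (z - z')\<close>
      by (intro add_mono mult_mono L_bound lip L2_lip F_le \<open>z' \<in> Z\<close>) auto
    also have "\<dots> = (L\<^sup>2 + L2 * L * D) * norm (z - z')" by (simp add: power2_eq_square algebra_simps)
    finally show ?thesis .
  qed
  then show ?thesis unfolding Z_def D_def by blast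
qed

end
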